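(* Let $m$ be an even positive integer, $q=2^m$, and let $\{u_1,u_2,u_3\}$ be a $3$-element subset of $U_{q+1}$. Let $M_3$ be the $4\times3$ matrix whose $j$-th column is $(u_j^{-5},u_j^{-3},u_j^{3},u_j^{5})^T$. Then $\mathrm{rank}(M_3)=3$.
   Context: $U_{q+1}$ denotes the set of $(q+1)$-th roots of unity in $\mathrm{GF}(q^2)$; ranks are over $\mathrm{GF}(q^2)$. *)

theory Defs
  imports "HOL-Analysis.Analysis"
begin

definition roots_of_unity :: "nat \<Rightarrow> 'a::field set" where
  "roots_of_unity n = {x. x ^ n = 1}"

definition M3 :: "'a::field \<Rightarrow> 'a \<Rightarrow> 'a \<Rightarrow> 'a^3^4" where
  "M3 u1 u2 u3 = vector (map (\<lambda>e::int. vector [u1 powi e, u2 powi e, u3 powi e]) [-5, -3, 3, 5])"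

end

theory Submission
  imports Defs
begin

(* Scaling column j by u_j^5 and putting z_j = u_j^2 turns the columns into (1, z_j, z_j^4, z_j^5);
   in characteristic 2 squaring is injective, so the z_j stay distinct. The 3x3 minors on the
   exponents 0,1,4 and 0,1,5 are the Vandermonde determinant times the complete homogeneous
   symmetric polynomials h_2 and h_3. If both vanished, then in characteristic 2 the cubic with
   roots z_1, z_2, z_3 would be (X - s)^3 with s = z_1 + z_2 + z_3, contradicting distinctness. *)

lemma of_nat_CARD_eq_0: "(of_nat CARD('a) :: 'a::{ring_1,finite}) = 0"
proof -
  have "(\<Sum>x\<in>(UNIV::'a set). x) = (\<Sum>x\<in>UNIV. x + 1)"
    by (rule sum.reindex_bij_witness[where i="\<lambda>x. x + 1" and j="\<lambda>x. x - 1"]) simp_all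
  also have "\<dots> = (\<Sum>x\<in>(UNIV::'a set). x) + of_nat CARD('a)"
    by (simp add: sum.distrib)
  finally show ?thesis
    by simp
qed

lemma two_eq_zero_if_CARD_power_of_two:
  assumes "CARD('a::{field,finite}) = 2 ^ k" and "k > 0"
  shows "(2::'a) = 0"
proof -
  have "(2::'a) ^ k = 0"
    using of_nat_CARD_eq_0[where 'a='a] assms(1) by simp
  then show ?thesis
    by simp
qed

lemma square_eq_square_iff_char_2:
  fixes a b :: "'a::field"
  assumes "(2::'a) = 0"
  shows "a ^ 2 = b ^ 2 \<longleftrightarrow> a = b"
proof -
  have "(a - b) ^ 2 = a ^ 2 - b ^ 2 - 2 * b * (a - b)"
    by algebra
  then have "(a - b) ^ 2 = a ^ 2 - b ^ 2"
    using assms by simp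
  then show ?thesis
    by auto
qed

definition complete_homogeneous_2 :: "'a \<Rightarrow> 'a \<Rightarrow> 'a \<Rightarrow> 'a::comm_ring_1" where
  "complete_homogeneous_2 x y z = x^2 + y^2 + z^2 + x*y + x*z + y*z"

definition complete_homogeneous_3 :: "'a \<Rightarrow> 'a \<Rightarrow> 'a \<Rightarrow> 'a::comm_ring_1" where
  "complete_homogeneous_3 x y z =
     x^3 + y^3 + z^3 + x^2*y + x^2*z + y^2*x + y^2*z + z^2*x + z^2*y + x*y*z"

lemma char_2_complete_homogeneous_2_3_eq_0_imp_eq:
  fixes x y z :: "'a::field"
  assumes "(2::'a) = 0"
    and "complete_homogeneous_2 x y z = 0" and "complete_homogeneous_3 x y z = 0"
  shows "x = y"
proof -
  define s where "s = x + y + z"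
  \<comment> \<open>Expand \<open>(w - s)^3\<close> against the cubic with roots \<open>x, y, z\<close>: \<open>h\<^sub>2 = s^2 - e\<^sub>2\<close>, \<open>h\<^sub>3 = s^3 - 2 s e\<^sub>2 + e\<^sub>3\<close>.\<close>
  have cube: "(w - s) ^ 3 = (w - x) * (w - y) * (w - z)
      + complete_homogeneous_2 x y z * w + complete_homogeneous_3 x y z
      + 2 * (s^2 * w - s * w^2 - s^3 + s * (x*y + x*z + y*z))" for w
    unfolding s_def complete_homogeneous_2_def complete_homogeneous_3_def by algebra
  have "(x - s) ^ 3 = 0" and "(y - s) ^ 3 = 0"
    using cube[of x] cube[of y] assms by simp_all
  then show ?thesis
    by simp
qed

lemma char_2_power_sums_0_1_4_5_eq_0_imp_zero:
  fixes d1 d2 d3 z1 z2 z3 :: "'a::field"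
  assumes "(2::'a) = 0" and "z1 \<noteq> z2" "z1 \<noteq> z3" "z2 \<noteq> z3"
    and sums: "\<And>k. k \<in> {0, 1, 4, 5} \<Longrightarrow> d1 * z1^k + d2 * z2^k + d3 * z3^k = 0"
  shows "d1 = 0 \<and> d2 = 0 \<and> d3 = 0"
proof -
  define S where "S k = d1 * z1^k + d2 * z2^k + d3 * z3^k" for k
  define V where "V = (z1 - z3) * (z2 - z3) * (z2 - z1)"
  have d3: "d3 = - d1 - d2"
    using sums[of 0] by (simp add: eq_neg_iff_add_eq_0 algebra_simps)
  \<comment> \<open>The left-hand sides are the minors on the exponents 0,1,4 and 0,1,5, up to the factor \<open>d1\<close>.\<close>
  have "d1 * V * complete_homogeneous_2 z1 z2 z3 = (z2^4 - z3^4) * S 1 - (z2 - z3) * S 4"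
    unfolding d3 S_def V_def complete_homogeneous_2_def by algebra
  moreover have "d1 * V * complete_homogeneous_3 z1 z2 z3 = (z2^5 - z3^5) * S 1 - (z2 - z3) * S 5"
    unfolding d3 S_def V_def complete_homogeneous_3_def by algebra
  moreover have "S 1 = 0" "S 4 = 0" "S 5 = 0"
    using sums[of 1] sums[of 4] sums[of 5] unfolding S_def by simp_all
  moreover have "V \<noteq> 0"
    using assms(2-4) unfolding V_def by simp
  ultimately have "d1 = 0"
    using char_2_complete_homogeneous_2_3_eq_0_imp_eq[OF assms(1)] assms(2) by auto
  moreover have "d2 * (z2 - z3) = 0"
    using \<open>d1 = 0\<close> sums[of 1] d3 by (simp add: algebra_simps)
  ultimately show ?thesis
    using d3 assms(4) by simp
qed

lemma rank_eq_CARD_if_ker_trivial: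
  fixes A :: "'a::field^'n^'m"
  assumes "\<And>x. A *v x = 0 \<Longrightarrow> x = 0"
  shows "rank A = CARD('n)"
proof -
  have "vec.span (rows A) = UNIV"
    using assms by (simp add: matrix_left_invertible_span_rows_gen [symmetric] matrix_left_invertible_ker)
  then show ?thesis
    by (metis row_rank_def_gen vec.dim_span vec_dim_card card_cart_basis)
qed

lemma vector_4 [simp]:
  "(vector [a, b, c, d] :: ('a::zero)^4) $ 1 = a"
  "(vector [a, b, c, d] :: ('a::zero)^4) $ 2 = b"
  "(vector [a, b, c, d] :: ('a::zero)^4) $ 3 = c"
  "(vector [a, b, c, d] :: ('a::zero)^4) $ 4 = d"
  unfolding vector_def by simp_all

lemma M3_mult_vector_eq_0_iff:
  "M3 u1 u2 u3 *v x = 0 \<longleftrightarrow>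
    (\<forall>e \<in> {-5, -3, 3, 5}. x$1 * u1 powi e + x$2 * u2 powi e + x$3 * u3 powi e = 0)"
  by (simp add: M3_def matrix_vector_mult_def vec_eq_iff forall_4 sum_3 mult.commute)

lemma power_int_two_mult_diff:
  fixes u :: "'a::field"
  assumes "u \<noteq> 0"
  shows "u powi (2 * int k - int n) = inverse u ^ n * (u ^ 2) ^ k"
  using assms by (simp add: power_int_diff power_int_mult power_int_inverse field_simps flip: power_mult)

lemma rank_M3_char_2:
  fixes u1 u2 u3 :: "'a::field"
  assumes "(2::'a) = 0" and "u1 \<noteq> 0" "u2 \<noteq> 0" "u3 \<noteq> 0"
    and "u1 \<noteq> u2" "u1 \<noteq> u3" "u2 \<noteq> u3"
  shows "rank (M3 u1 u2 u3) = 3"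
proof -
  have "x = 0" if "M3 u1 u2 u3 *v x = 0" for x
  proof -
    define d where "d j u = x$j * inverse u ^ 5" for j u
    have "d 1 u1 * (u1^2)^k + d 2 u2 * (u2^2)^k + d 3 u3 * (u3^2)^k = 0"
      if "k \<in> {0, 1, 4, 5}" for k
    proof -
      have "2 * int k - int 5 \<in> {-5, -3, 3, 5}"
        using that by auto
      then have "x$1 * u1 powi (2 * int k - int 5) + x$2 * u2 powi (2 * int k - int 5)
          + x$3 * u3 powi (2 * int k - int 5) = 0"
        using \<open>M3 u1 u2 u3 *v x = 0\<close> unfolding M3_mult_vector_eq_0_iff by blast
      then show ?thesis
        unfolding power_int_two_mult_diff[OF assms(2)] power_int_two_mult_diff[OF assms(3)]
          power_int_two_mult_diff[OF assms(4)] d_def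
        by (simp add: ac_simps)
    qed
    moreover have "u1^2 \<noteq> u2^2" "u1^2 \<noteq> u3^2" "u2^2 \<noteq> u3^2"
      using assms square_eq_square_iff_char_2 by auto
    ultimately have "d 1 u1 = 0" "d 2 u2 = 0" "d 3 u3 = 0"
      using char_2_power_sums_0_1_4_5_eq_0_imp_zero[OF assms(1)] by blast+
    then show "x = 0"
      using assms(2-4) by (simp add: d_def vec_eq_iff forall_3)
  qed
  then show ?thesis
    using rank_eq_CARD_if_ker_trivial[of "M3 u1 u2 u3"] by simp
qed

theorem lemma16:
  fixes m :: nat and q :: nat and u1 u2 u3 :: "'a::{field,finite}"
  assumes "even m" and "m > 0" and "q = 2 ^ m"
    and "CARD('a) = q ^ 2"
    and "u1 \<in> roots_of_unity (q + 1)" and "u2 \<in> roots_of_unity (q + 1)"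
    and "u3 \<in> roots_of_unity (q + 1)"
    and "u1 \<noteq> u2" and "u1 \<noteq> u3" and "u2 \<noteq> u3"
  shows "rank (M3 u1 u2 u3) = 3"
proof -
  have "(2::'a) = 0"
    using two_eq_zero_if_CARD_power_of_two[of "m * 2"] assms(2-4) by (simp add: power_mult)
  moreover have "u1 \<noteq> 0" "u2 \<noteq> 0" "u3 \<noteq> 0"
    using assms(5-7) by (auto simp: roots_of_unity_def)
  ultimately show ?thesis
    using rank_M3_char_2 assms(8-10) by blast
qed

end
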